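(* Let $p\ge3$ be an integer, $N\ge 1$, $\Delta_2,\Delta_p>0$, let $Y\in\mathbb{R}^{N\times N}$ be a symmetric matrix and $T$ a symmetric order-$p$ tensor on $\mathbb{R}^N$. For $x\in\mathbb{R}^N$ define $$A_i(x)=\frac{\sqrt{(p-1)!}}{N^{(p-1)/2}}\sum_{k_2<\dots<k_p}\frac{T_{ik_2\dots k_p}}{\Delta_p}x_{k_2}\cdots x_{k_p}+\frac{1}{\sqrt N}\sum_k\frac{Y_{ik}}{\Delta_2}x_k .$$ The ML-AMP algorithm iterates, for $t\ge 1$, $$B^t_i=A_i(\hat x^t)-\mathrm r_t\,\hat x^{t-1}_i,\qquad \hat x^{t+1}_i=\frac{B^t_i}{\frac1{\sqrt N}\|B^t\|_2},\qquad \hat\sigma^{t+1}=\frac{1}{\frac1{\sqrt N}\|B^t\|_2},$$ $$\mathrm r_t=\frac{1}{\Delta_2}\frac1N\sum_k\hat\sigma^t_k+\frac{p-1}{\Delta_p}\frac1N\sum_k\hat\sigma^t_k\Big(\frac1N\sum_k\hat x^t_k\hat x^{t-1}_k\Big)^{p-2},$$ where $\hat\sigma^t_k=\hat\sigma^t$ for all $k$. Let $(\hat x^*,\hat\sigma^* )$ be a fixed point of this iteration (i.e. $\hat x^{t-1}=\hat x^t=\hat x^{t+1}=\hat x^*$ and $\hat\sigma^t=\hat\sigma^{t+1}=\hat\sigma^*$, with $B^*\neq 0$). Then $\hat x^*\in\mathbb{S}^{N-1}(\sqrt N)$ and $\hat x^*$ satisfies the stationarity condition of the loss $$\mathcal L(x)=\sum_{i<j}\frac{1}{2\Delta_2}\Big(Y_{ij}-\frac{x_ix_j}{\sqrt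 N}\Big)^2+\sum_{i_1<\dots<i_p}\frac{1}{2\Delta_p}\Big(T_{i_1\dots i_p}-\frac{\sqrt{(p-1)!}}{N^{(p-1)/2}}x_{i_1}\cdots x_{i_p}\Big)^2$$ on the sphere $\mathbb{S}^{N-1}(\sqrt N)$ in the sense that there exists $\mu\in\mathbb{R}$ with $$0=-\mu\,\hat x^*_i+\frac1{\sqrt N}\sum_k\frac{Y_{ik}}{\Delta_2}\hat x^*_k+\frac{\sqrt{(p-1)!}}{N^{(p-1)/2}}\sum_{k_2<\dots<k_p}\frac{T_{ik_2\dots k_p}}{\Delta_p}\hat x^*_{k_2}\cdots\hat x^*_{k_p}\quad\text{for all } i,$$ namely with $\mu=\frac1{\sqrt N}\|B^*\|_2+\mathrm r^*$, where $B^*,\mathrm r^*$ are the values of $B^t,\mathrm r_t$ at the fixed point.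
   Context: $\|\cdot\|_2$ is the Euclidean norm; $\mathbb{S}^{N-1}(\sqrt N)$ is the sphere of radius $\sqrt N$ in $\mathbb{R}^N$. The matrix and tensor entries appearing in the sums are taken with the same conventions in the algorithm and in the stationarity equation. *)

theory Defs
  imports Complex_Main "HOL-Library.Multiset"
begin

text \<open>Vectors in R^N are functions nat => real, only indices < N matter.
  A symmetric N x N matrix is nat => nat => real; an order-p tensor is a
  function of index lists of length p.\<close>

definition l2norm :: "nat \<Rightarrow> (nat \<Rightarrow> real) \<Rightarrow> real" where
  "l2norm N x = sqrt (\<Sum>k<N. (x k)^2)"

definition sym_matrix :: "nat \<Rightarrow> (nat \<Rightarrow> nat \<Rightarrow> real) \<Rightarrow> bool" where
  "sym_matrix N Y \<longleftrightarrow> (\<forall>i<N. \<forall>j<N. Y i j = Y j i)"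

definition sym_tensor :: "nat \<Rightarrow> nat \<Rightarrow> (nat list \<Rightarrow> real) \<Rightarrow> bool" where
  "sym_tensor N p T \<longleftrightarrow> (\<forall>ks ks'. length ks = p \<and> set ks \<subseteq> {..<N} \<and> mset ks' = mset ks
       \<longrightarrow> T ks' = T ks)"

definition incr_tuples :: "nat \<Rightarrow> nat \<Rightarrow> nat list set" where
  "incr_tuples N m = {ks. length ks = m \<and> sorted_wrt (<) ks \<and> set ks \<subseteq> {..<N}}"

definition tensor_field :: "nat \<Rightarrow> nat \<Rightarrow> real \<Rightarrow> (nat list \<Rightarrow> real) \<Rightarrow> (nat \<Rightarrow> real) \<Rightarrow> nat \<Rightarrow> real" where
  "tensor_field N p Dp T x i =
     sqrt (fact (p - 1)) / (real N) powr ((real p - 1) / 2) *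
     (\<Sum>ks\<in>incr_tuples N (p - 1). T (i # ks) / Dp * prod_list (map x ks))"

definition matrix_field :: "nat \<Rightarrow> real \<Rightarrow> (nat \<Rightarrow> nat \<Rightarrow> real) \<Rightarrow> (nat \<Rightarrow> real) \<Rightarrow> nat \<Rightarrow> real" where
  "matrix_field N D2 Y x i = 1 / sqrt (real N) * (\<Sum>k<N. Y i k / D2 * x k)"

definition amp_A :: "nat \<Rightarrow> nat \<Rightarrow> real \<Rightarrow> real \<Rightarrow> (nat \<Rightarrow> nat \<Rightarrow> real) \<Rightarrow> (nat list \<Rightarrow> real)
      \<Rightarrow> (nat \<Rightarrow> real) \<Rightarrow> nat \<Rightarrow> real" where
  "amp_A N p D2 Dp Y T x i = tensor_field N p Dp T x i + matrix_field N D2 Y x i"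

definition amp_r :: "nat \<Rightarrow> nat \<Rightarrow> real \<Rightarrow> real \<Rightarrow> real \<Rightarrow> (nat \<Rightarrow> real) \<Rightarrow> (nat \<Rightarrow> real) \<Rightarrow> real" where
  "amp_r N p D2 Dp \<sigma> x xprev =
     1 / D2 * (1 / real N * (\<Sum>k<N. \<sigma>)) +
     (real p - 1) / Dp * (1 / real N * (\<Sum>k<N. \<sigma>)) *
       (1 / real N * (\<Sum>k<N. x k * xprev k)) ^ (p - 2)"

definition amp_B :: "nat \<Rightarrow> nat \<Rightarrow> real \<Rightarrow> real \<Rightarrow> (nat \<Rightarrow> nat \<Rightarrow> real) \<Rightarrow> (nat list \<Rightarrow> real)
      \<Rightarrow> real \<Rightarrow> (nat \<Rightarrow> real) \<Rightarrow> (nat \<Rightarrow> real) \<Rightarrow> nat \<Rightarrow> real" where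
  "amp_B N p D2 Dp Y T \<sigma> x xprev i = amp_A N p D2 Dp Y T x i - amp_r N p D2 Dp \<sigma> x xprev * xprev i"

end

theory Submission
  imports Defs
begin

(* At a fixed point the iterate is B divided by its normalised length c = |B| / sqrt N,
   so it has length sqrt N; and x = B / c says c x = A(x) - r x, i.e. A(x) = (c + r) x,
   which is the stationarity equation with multiplier c + r. *)

lemma l2norm_cong:
  assumes "\<And>k. k < N \<Longrightarrow> v k = w k"
  shows "l2norm N v = l2norm N w"
  unfolding l2norm_def using assms by simp

lemma l2norm_scale: "l2norm N (\<lambda>k. c * v k) = \<bar>c\<bar> * l2norm N v"
  unfolding l2norm_def
  by (simp add: power_mult_distrib sum_distrib_left[symmetric] real_sqrt_mult)

lemma l2norm_pos:
  assumes "j < N" and "v j \<noteq> 0"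
  shows "l2norm N v > 0"
proof -
  have "(\<Sum>k<N. (v k)^2) > 0"
    using assms by (intro sum_pos2[of "{..<N}" j]) auto
  then show ?thesis unfolding l2norm_def by simp
qed

lemma normalized_l2norm:
  assumes "N \<ge> 1" and "l2norm N v > 0"
    and "\<forall>i<N. x i = v i / (1 / sqrt (real N) * l2norm N v)"
  shows "l2norm N x = sqrt (real N)"
proof -
  let ?c = "1 / sqrt (real N) * l2norm N v"
  have "l2norm N x = l2norm N (\<lambda>k. (1 / ?c) * v k)"
    using assms(3) by (intro l2norm_cong) simp
  also have "\<dots> = \<bar>1 / ?c\<bar> * l2norm N v"
    by (rule l2norm_scale)
  also have "\<dots> = sqrt (real N)"
    using assms(1,2) by simp
  finally show ?thesis .
qed

lemma amp_B_eq_scaled_iff_stationary: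
  "amp_B N p D2 Dp Y T \<sigma> x x i = c * x i \<longleftrightarrow>
     0 = - (c + amp_r N p D2 Dp \<sigma> x x) * x i + matrix_field N D2 Y x i + tensor_field N p Dp T x i"
  unfolding amp_B_def amp_A_def by (auto simp: algebra_simps)

theorem mainTheorem3:
  fixes N p :: nat and D2 Dp \<sigma> :: real
    and Y :: "nat \<Rightarrow> nat \<Rightarrow> real" and T :: "nat list \<Rightarrow> real" and x :: "nat \<Rightarrow> real"
  assumes "p \<ge> 3" and "N \<ge> 1" and "D2 > 0" and "Dp > 0"
    and "sym_matrix N Y" and "sym_tensor N p T"
    and Bnz: "\<exists>i<N. amp_B N p D2 Dp Y T \<sigma> x x i \<noteq> 0"
    and fix_x: "\<forall>i<N. x i = amp_B N p D2 Dp Y T \<sigma> x x i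
                     / (1 / sqrt (real N) * l2norm N (amp_B N p D2 Dp Y T \<sigma> x x))"
    and fix_\<sigma>: "\<sigma> = 1 / (1 / sqrt (real N) * l2norm N (amp_B N p D2 Dp Y T \<sigma> x x))"
  shows "l2norm N x = sqrt (real N) \<and>
    (\<exists>\<mu>. \<mu> = 1 / sqrt (real N) * l2norm N (amp_B N p D2 Dp Y T \<sigma> x x) + amp_r N p D2 Dp \<sigma> x x \<and>
         (\<forall>i<N. 0 = - \<mu> * x i + matrix_field N D2 Y x i + tensor_field N p Dp T x i))"
proof -
  define B where "B = amp_B N p D2 Dp Y T \<sigma> x x"
  define c where "c = 1 / sqrt (real N) * l2norm N B"
  have B_pos: "l2norm N B > 0"
    using Bnz l2norm_pos unfolding B_def by blast
  have c_pos: "c > 0"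
    using B_pos \<open>N \<ge> 1\<close> unfolding c_def by simp
  have on_sphere: "l2norm N x = sqrt (real N)"
    using normalized_l2norm[OF \<open>N \<ge> 1\<close> B_pos] fix_x unfolding B_def by blast
  have "\<forall>i<N. B i = c * x i"
    using fix_x c_pos unfolding B_def[symmetric] c_def[symmetric] by simp
  then have "\<forall>i<N. 0 = - (c + amp_r N p D2 Dp \<sigma> x x) * x i
                       + matrix_field N D2 Y x i + tensor_field N p Dp T x i"
    unfolding B_def by (simp add: amp_B_eq_scaled_iff_stationary)
  with on_sphere show ?thesis
    unfolding c_def B_def by blast
qed

end
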